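(* For every linear operator $T$ in $H$, the essential numerical range $W_e(T)$ is closed and convex, and $\operatorname{conv}\sigma_e(T)\subset W_e(T)$.
   Context: $H$ is a separable infinite-dimensional complex Hilbert space; operators need not be closed, closable or densely defined. $W_e(T)=\{\lambda\in\mathbb C:\exists x_n\in\operatorname{dom}(T),\|x_n\|=1,x_n\stackrel{w}{\to}0,\langle Tx_n,x_n\rangle\to\lambda\}$ and $\sigma_e(T)=\{\lambda:\exists x_n\in\operatorname{dom}(T),\|x_n\|=1,x_n\stackrel{w}{\to}0,\|(T-\lambda)x_n\|\to0\}$. *)

theory Defs
  imports "HOL-Analysis.Analysis"
begin

text \<open>The separable infinite-dimensional complex Hilbert space H is modelled
  concretely as l2 = square-summable complex sequences (every such H is unitarily
  isomorphic to l2).  An operator in H is a pair (D, T): a domain D (a linear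
  subspace of l2, not necessarily closed or dense) and a map T defined on D.\<close>

definition l2 :: "(nat \<Rightarrow> complex) set" where
  "l2 = {x. summable (\<lambda>i. (cmod (x i))^2)}"

definition l2_inner :: "(nat \<Rightarrow> complex) \<Rightarrow> (nat \<Rightarrow> complex) \<Rightarrow> complex" where
  "l2_inner x y = (\<Sum>i. x i * cnj (y i))"

definition l2_norm :: "(nat \<Rightarrow> complex) \<Rightarrow> real" where
  "l2_norm x = sqrt (\<Sum>i. (cmod (x i))^2)"

definition weakly_to_zero :: "(nat \<Rightarrow> (nat \<Rightarrow> complex)) \<Rightarrow> bool" where
  "weakly_to_zero X \<longleftrightarrow> (\<forall>y\<in>l2. (\<lambda>n. l2_inner (X n) y) \<longlonglongrightarrow> 0)"

definition linear_operator :: "(nat \<Rightarrow> complex) set \<Rightarrow> ((nat \<Rightarrow> complex) \<Rightarrow> (nat \<Rightarrow> complex)) \<Rightarrow> bool" where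
  "linear_operator D T \<longleftrightarrow>
     D \<subseteq> l2 \<and> (\<lambda>i. 0) \<in> D \<and>
     (\<forall>x\<in>D. \<forall>y\<in>D. (\<lambda>i. x i + y i) \<in> D) \<and>
     (\<forall>c. \<forall>x\<in>D. (\<lambda>i. c * x i) \<in> D) \<and>
     (\<forall>x\<in>D. T x \<in> l2) \<and>
     (\<forall>x\<in>D. \<forall>y\<in>D. T (\<lambda>i. x i + y i) = (\<lambda>i. T x i + T y i)) \<and>
     (\<forall>c. \<forall>x\<in>D. T (\<lambda>i. c * x i) = (\<lambda>i. c * T x i))"

definition ess_num_range :: "(nat \<Rightarrow> complex) set \<Rightarrow> ((nat \<Rightarrow> complex) \<Rightarrow> (nat \<Rightarrow> complex)) \<Rightarrow> complex set" where
  "ess_num_range D T = {z. \<exists>X. (\<forall>n. X n \<in> D \<and> l2_norm (X n) = 1) \<and> weakly_to_zero X \<and>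
       (\<lambda>n. l2_inner (T (X n)) (X n)) \<longlonglongrightarrow> z}"

definition ess_spectrum :: "(nat \<Rightarrow> complex) set \<Rightarrow> ((nat \<Rightarrow> complex) \<Rightarrow> (nat \<Rightarrow> complex)) \<Rightarrow> complex set" where
  "ess_spectrum D T = {z. \<exists>X. (\<forall>n. X n \<in> D \<and> l2_norm (X n) = 1) \<and> weakly_to_zero X \<and>
       (\<lambda>n. l2_norm (\<lambda>i. T (X n) i - z * X n i)) \<longlonglongrightarrow> 0}"

end

theory Submission
  imports Defs
begin

text \<open>A bounded sequence in l2 converges weakly to zero iff it converges to zero coordinatewise.
  Hence z lies in the essential numerical range iff for every \<epsilon> > 0 and N there is a unit vector
  u in the domain whose first N coordinates are \<epsilon>-small and with |<Tu,u> - z| < \<epsilon>; closedness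
  follows by a diagonal argument. For convexity of W_e(T), given p and q in it, take such a vector
  x for p and one y for q that is moreover almost orthogonal to x. An intermediate value argument on the two-dimensional span of x
  and y (as in the Toeplitz--Hausdorff theorem) gives a unit vector u there with
  <Tu,u> = (1 - t) <Tx,x> + t <Ty,y>, and near-orthogonality keeps the coordinates of u small.
  Finally |<Tx,x> - z| \<le> ||(T - z) x|| for unit x by Cauchy--Schwarz, so the essential spectrum
  lies in the closed convex set W_e(T), and so does its convex hull.\<close>

section \<open>Square-summable sequences\<close>

lemma l2_summable_norm_mult:
  assumes "x \<in> l2" "y \<in> l2"
  shows "summable (\<lambda>i. cmod (x i) * cmod (y i))"
proof (rule summable_comparison_test)
  have "norm (cmod (x i) * cmod (y i)) \<le> ((cmod (x i))\<^sup>2 + (cmod (y i))\<^sup>2) / 2" for i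
    using sum_squares_bound[of "cmod (x i)" "cmod (y i)"] by (simp add: abs_mult)
  then show "\<exists>N. \<forall>i\<ge>N.
      norm (cmod (x i) * cmod (y i)) \<le> ((cmod (x i))\<^sup>2 + (cmod (y i))\<^sup>2) / 2"
    by blast
  show "summable (\<lambda>i. ((cmod (x i))\<^sup>2 + (cmod (y i))\<^sup>2) / 2)"
    using assms by (intro summable_divide summable_add) (auto simp: l2_def)
qed

lemma l2_summable_inner:
  assumes "x \<in> l2" "y \<in> l2"
  shows "summable (\<lambda>i. x i * cnj (y i))"
proof (rule summable_norm_cancel)
  show "summable (\<lambda>i. norm (x i * cnj (y i)))"
    using l2_summable_norm_mult[OF assms] by (simp add: norm_mult)
qed

lemma l2_scale: "x \<in> l2 \<Longrightarrow> (\<lambda>i. c * x i) \<in> l2"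
  unfolding l2_def by (simp add: norm_mult power_mult_distrib summable_mult)

lemma l2_add:
  assumes "x \<in> l2" "y \<in> l2"
  shows "(\<lambda>i. x i + y i) \<in> l2"
  unfolding l2_def mem_Collect_eq
proof (rule summable_comparison_test)
  have "(cmod (x i + y i))\<^sup>2 \<le> (cmod (x i) + cmod (y i))\<^sup>2" for i
    by (simp add: norm_triangle_ineq power_mono)
  then have "norm ((cmod (x i + y i))\<^sup>2)
      \<le> (cmod (x i))\<^sup>2 + (cmod (y i))\<^sup>2 + 2 * (cmod (x i) * cmod (y i))" for i
    by (simp add: power2_sum mult.assoc)
  then show "\<exists>N. \<forall>i\<ge>N. norm ((cmod (x i + y i))\<^sup>2)
      \<le> (cmod (x i))\<^sup>2 + (cmod (y i))\<^sup>2 + 2 * (cmod (x i) * cmod (y i))"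
    by blast
  show "summable (\<lambda>i. (cmod (x i))\<^sup>2 + (cmod (y i))\<^sup>2 + 2 * (cmod (x i) * cmod (y i)))"
    using assms l2_summable_norm_mult[OF assms]
    by (intro summable_add summable_mult) (auto simp: l2_def)
qed

lemma l2_if_zero: "y \<in> l2 \<Longrightarrow> (\<lambda>i. if P i then 0 else y i) \<in> l2"
  unfolding l2_def mem_Collect_eq by (rule summable_comparison_test) auto

lemma l2_norm_nonneg: "x \<in> l2 \<Longrightarrow> 0 \<le> l2_norm x"
  by (simp add: l2_norm_def l2_def suminf_nonneg)

lemma l2_norm_squared: "x \<in> l2 \<Longrightarrow> (l2_norm x)\<^sup>2 = (\<Sum>i. (cmod (x i))\<^sup>2)"
  by (simp add: l2_norm_def l2_def suminf_nonneg)

lemma l2_inner_self: "x \<in> l2 \<Longrightarrow> l2_inner x x = of_real ((l2_norm x)\<^sup>2)"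
  by (simp add: l2_inner_def l2_norm_squared l2_def complex_norm_square suminf_of_real flip: of_real_power)

lemma l2_norm_eq_1_iff:
  assumes "x \<in> l2"
  shows "l2_norm x = 1 \<longleftrightarrow> l2_inner x x = 1"
proof -
  have "l2_inner x x = 1 \<longleftrightarrow> (l2_norm x)\<^sup>2 = 1"
    using assms by (simp add: l2_inner_self del: of_real_power)
  then show ?thesis
    using l2_norm_nonneg[OF assms] by (simp add: power2_eq_1_iff)
qed

lemma l2_inner_lincomb_left:
  assumes "x \<in> l2" "y \<in> l2" "w \<in> l2"
  shows "l2_inner (\<lambda>i. a * x i + b * y i) w = a * l2_inner x w + b * l2_inner y w"
proof -
  have "summable (\<lambda>i. a * (x i * cnj (w i)))" "summable (\<lambda>i. b * (y i * cnj (w i)))"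
    using l2_summable_inner assms by (auto intro: summable_mult)
  then show ?thesis
    unfolding l2_inner_def
    by (simp add: distrib_right suminf_add[symmetric] mult.assoc
        suminf_mult[OF l2_summable_inner[OF assms(1,3)]] suminf_mult[OF l2_summable_inner[OF assms(2,3)]])
qed

lemma l2_inner_commute:
  assumes "x \<in> l2" "y \<in> l2"
  shows "l2_inner y x = cnj (l2_inner x y)"
proof -
  have "(\<lambda>i. x i * cnj (y i)) sums l2_inner x y"
    using l2_summable_inner[OF assms] by (simp add: l2_inner_def summable_sums)
  then have "(\<lambda>i. cnj (x i * cnj (y i))) sums cnj (l2_inner x y)"
    by (simp only: sums_cnj)
  then have "(\<lambda>i. y i * cnj (x i)) sums cnj (l2_inner x y)"
    by (simp add: mult.commute)
  then show ?thesis
    by (simp add: l2_inner_def sums_iff)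
qed

lemma l2_inner_lincomb_right:
  assumes "x \<in> l2" "y \<in> l2" "w \<in> l2"
  shows "l2_inner w (\<lambda>i. a * x i + b * y i) = cnj a * l2_inner w x + cnj b * l2_inner w y"
proof -
  have "l2_inner w (\<lambda>i. a * x i + b * y i) = cnj (l2_inner (\<lambda>i. a * x i + b * y i) w)"
    by (rule l2_inner_commute[OF l2_add[OF l2_scale[OF assms(1)] l2_scale[OF assms(2)]] assms(3)])
  also have "\<dots> = cnj a * cnj (l2_inner x w) + cnj b * cnj (l2_inner y w)"
    by (simp add: l2_inner_lincomb_left[OF assms])
  finally show ?thesis
    using l2_inner_commute[OF assms(1,3)] l2_inner_commute[OF assms(2,3)] by simp
qed

lemma l2_inner_scale_both:
  assumes "x \<in> l2" "w \<in> l2"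
  shows "l2_inner (\<lambda>i. c * x i) (\<lambda>i. c * w i) = (cmod c)\<^sup>2 * l2_inner x w"
proof -
  have "(\<lambda>i. c * x i * cnj (c * w i)) = (\<lambda>i. (cmod c)\<^sup>2 * (x i * cnj (w i)))"
    by (simp add: complex_norm_square mult_ac del: of_real_power)
  then show ?thesis
    unfolding l2_inner_def using suminf_mult[OF l2_summable_inner[OF assms]] by simp
qed

lemma l2_inner_lincomb_lincomb:
  assumes "x \<in> l2" "y \<in> l2" "u \<in> l2" "v \<in> l2"
  shows "l2_inner (\<lambda>i. a * x i + b * y i) (\<lambda>i. a * u i + b * v i)
    = (cmod a)\<^sup>2 * l2_inner x u + (cmod b)\<^sup>2 * l2_inner y v
      + a * cnj b * l2_inner x v + b * cnj a * l2_inner y u"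
proof -
  have "l2_inner (\<lambda>i. a * x i + b * y i) (\<lambda>i. a * u i + b * v i)
      = a * (cnj a * l2_inner x u + cnj b * l2_inner x v) + b * (cnj a * l2_inner y u + cnj b * l2_inner y v)"
    using assms by (simp add: l2_inner_lincomb_left l2_inner_lincomb_right l2_add l2_scale)
  moreover have "(complex_of_real (cmod a))\<^sup>2 = a * cnj a" "(complex_of_real (cmod b))\<^sup>2 = b * cnj b"
    by (metis complex_norm_square of_real_power)+
  ultimately show ?thesis
    by (simp add: algebra_simps)
qed

lemma l2_inner_self_lincomb_unit:
  assumes "x \<in> l2" "y \<in> l2" "l2_norm x = 1" "l2_norm y = 1" "(cmod a)\<^sup>2 + (cmod b)\<^sup>2 = 1"
  shows "l2_inner (\<lambda>i. a * x i + b * y i) (\<lambda>i. a * x i + b * y i)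
    = 1 + a * cnj b * l2_inner x y + b * cnj a * l2_inner y x"
proof -
  have "(complex_of_real (cmod a))\<^sup>2 + (complex_of_real (cmod b))\<^sup>2 = 1"
    using assms(5) by (metis of_real_1 of_real_add of_real_power)
  then show ?thesis
    using assms(1-4) by (simp add: l2_inner_lincomb_lincomb l2_norm_eq_1_iff)
qed

lemma l2_Cauchy_Schwarz:
  assumes "x \<in> l2" "y \<in> l2"
  shows "cmod (l2_inner x y) \<le> l2_norm x * l2_norm y"
proof -
  have "(\<Sum>i<n. cmod (x i) * cmod (y i)) \<le> l2_norm x * l2_norm y" for n
  proof -
    have "(\<Sum>i<n. cmod (x i) * cmod (y i)) \<le> L2_set (cmod \<circ> x) {..<n} * L2_set (cmod \<circ> y) {..<n}"
      using L2_set_mult_ineq[of "cmod \<circ> x" "cmod \<circ> y" "{..<n}"] by simp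
    also have "\<dots> \<le> l2_norm x * l2_norm y"
      using assms unfolding L2_set_def l2_norm_def l2_def
      by (intro mult_mono real_sqrt_le_mono) (auto intro!: sum_le_suminf suminf_nonneg sum_nonneg)
    finally show ?thesis .
  qed
  then have "(\<Sum>i. cmod (x i) * cmod (y i)) \<le> l2_norm x * l2_norm y"
    by (rule suminf_le_const[OF l2_summable_norm_mult[OF assms]])
  moreover have "cmod (l2_inner x y) \<le> (\<Sum>i. cmod (x i) * cmod (y i))"
    unfolding l2_inner_def
    using summable_norm[of "\<lambda>i. x i * cnj (y i)"] l2_summable_norm_mult[OF assms]
    by (simp add: norm_mult)
  ultimately show ?thesis
    by linarith
qed

lemma l2_tail_norm_tendsto_zero:
  assumes "y \<in> l2"
  shows "(\<lambda>N. l2_norm (\<lambda>i. if i < N then 0 else y i)) \<longlonglongrightarrow> 0"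
proof -
  define f where "f = (\<lambda>i. (cmod (y i))\<^sup>2)"
  have "f sums (\<Sum>i. f i)"
    using assms by (simp add: f_def l2_def summable_sums)
  then have "(\<lambda>i. f i - (if i \<in> {..<N} then f i else 0)) sums ((\<Sum>i. f i) - (\<Sum>i<N. f i))" for N
    by (intro sums_diff sums_If_finite_set) auto
  moreover have "(\<lambda>i. (cmod (if i < N then 0 else y i))\<^sup>2)
      = (\<lambda>i. f i - (if i \<in> {..<N} then f i else 0))" for N
    by (auto simp: f_def)
  ultimately have "l2_norm (\<lambda>i. if i < N then 0 else y i) = sqrt ((\<Sum>i. f i) - (\<Sum>i<N. f i))" for N
    unfolding l2_norm_def by (simp add: sums_iff)
  moreover have "(\<lambda>N. sqrt ((\<Sum>i. f i) - (\<Sum>i<N. f i))) \<longlonglongrightarrow> sqrt ((\<Sum>i. f i) - (\<Sum>i. f i))"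
    using \<open>f sums (\<Sum>i. f i)\<close> by (intro tendsto_intros) (simp add: sums_def)
  ultimately show ?thesis
    by simp
qed

lemma l2_inner_split_tail:
  assumes "x \<in> l2" "y \<in> l2"
  shows "l2_inner x y = (\<Sum>i<N. x i * cnj (y i)) + l2_inner x (\<lambda>i. if i < N then 0 else y i)"
proof -
  define t where "t = (\<lambda>i. if i < N then 0 else y i)"
  have "(\<lambda>i. if i \<in> {..<N} then x i * cnj (y i) else 0) sums (\<Sum>i<N. x i * cnj (y i))"
    by (rule sums_If_finite_set) simp
  moreover have "(\<lambda>i. x i * cnj (t i)) sums l2_inner x t"
    unfolding l2_inner_def t_def
    by (rule summable_sums[OF l2_summable_inner[OF assms(1) l2_if_zero[OF assms(2)]]])
  ultimately have "(\<lambda>i. (if i \<in> {..<N} then x i * cnj (y i) else 0) + x i * cnj (t i))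
      sums ((\<Sum>i<N. x i * cnj (y i)) + l2_inner x t)"
    by (rule sums_add)
  moreover have "(\<lambda>i. (if i \<in> {..<N} then x i * cnj (y i) else 0) + x i * cnj (t i))
      = (\<lambda>i. x i * cnj (y i))"
    by (auto simp: t_def)
  ultimately show ?thesis
    unfolding l2_inner_def t_def by (simp add: sums_iff)
qed

section \<open>Weak convergence to zero\<close>

lemma weakly_to_zero_coordinate:
  assumes "weakly_to_zero X"
  shows "(\<lambda>n. X n j) \<longlonglongrightarrow> 0"
proof -
  define e where "e = (\<lambda>i. if i = j then 1 else 0 :: complex)"
  have "(\<lambda>i. (cmod (e i))\<^sup>2) = (\<lambda>i. if i = j then 1 else 0)"
    by (auto simp: e_def)
  then have "e \<in> l2"
    by (simp add: l2_def)
  moreover have "l2_inner x e = x j" for x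
  proof -
    have "(\<lambda>i. x i * cnj (e i)) = (\<lambda>i. if i = j then x i else 0)"
      by (auto simp: e_def)
    then show ?thesis
      unfolding l2_inner_def using sums_single[of j x] by (simp add: sums_iff)
  qed
  ultimately show ?thesis
    using assms unfolding weakly_to_zero_def by auto
qed

lemma weakly_to_zeroI:
  assumes l2: "\<And>n. X n \<in> l2" and bounded: "\<And>n. l2_norm (X n) \<le> B"
    and coordinates: "\<And>j. (\<lambda>n. X n j) \<longlonglongrightarrow> 0"
  shows "weakly_to_zero X"
  unfolding weakly_to_zero_def
proof (intro ballI tendstoI)
  fix y and e :: real
  assume y: "y \<in> l2" and e: "0 < e"
  have B: "0 \<le> B"
    by (rule order_trans[OF l2_norm_nonneg[OF l2] bounded])
  have "eventually (\<lambda>N. l2_norm (\<lambda>i. if i < N then 0 else y i) < e / (2 * (B + 1))) sequentially"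
    using order_tendstoD(2)[OF l2_tail_norm_tendsto_zero[OF y]] e B by simp
  then obtain N where tail_small: "l2_norm (\<lambda>i. if i < N then 0 else y i) < e / (2 * (B + 1))"
    unfolding eventually_sequentially by blast
  define t where "t = (\<lambda>i. if i < N then 0 else y i)"
  have t: "t \<in> l2"
    unfolding t_def by (rule l2_if_zero[OF y])
  have split: "l2_inner (X n) y = (\<Sum>i<N. X n i * cnj (y i)) + l2_inner (X n) t" for n
    unfolding t_def by (rule l2_inner_split_tail[OF l2 y])
  have "(\<lambda>n. \<Sum>i<N. X n i * cnj (y i)) \<longlonglongrightarrow> (\<Sum>i<N. 0 * cnj (y i))"
    by (intro tendsto_intros coordinates)
  then have "eventually (\<lambda>n. dist (\<Sum>i<N. X n i * cnj (y i)) 0 < e / 2) sequentially"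
    using e by (intro tendstoD) simp_all
  then have head: "eventually (\<lambda>n. cmod (\<Sum>i<N. X n i * cnj (y i)) < e / 2) sequentially"
    by (simp add: dist_norm)
  have tail: "cmod (l2_inner (X n) t) < e / 2" for n
  proof -
    have "cmod (l2_inner (X n) t) \<le> l2_norm (X n) * l2_norm t"
      by (rule l2_Cauchy_Schwarz[OF l2 t])
    also have "\<dots> \<le> (B + 1) * l2_norm t"
      using bounded[of n] l2_norm_nonneg[OF t] by (intro mult_right_mono) auto
    also have "\<dots> < e / 2"
      using tail_small B by (simp add: t_def field_simps)
    finally show ?thesis .
  qed
  from head show "eventually (\<lambda>n. dist (l2_inner (X n) y) 0 < e) sequentially"
  proof eventually_elim
    case (elim n)
    have "cmod (l2_inner (X n) y) \<le> cmod (\<Sum>i<N. X n i * cnj (y i)) + cmod (l2_inner (X n) t)"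
      unfolding split by (rule norm_triangle_ineq)
    then show ?case
      using elim tail[of n] by (simp add: dist_norm)
  qed
qed

section \<open>Interpolation in a two-dimensional subspace\<close>

lemma exists_unit_rotation_to_real: "\<exists>E. cmod E = 1 \<and> Im (cnj E * P + E * Q) = 0"
proof -
  define w where "w = P - cnj Q"
  have "cnj (cis (Arg w)) * w = cmod w"
    using rcis_cmod_Arg[of w] unfolding rcis_def
    by (metis cis_cnj cis_mult add.right_inverse cis_zero mult.left_commute mult_1_right)
  moreover have "Im (cnj E * P + E * Q) = Im (cnj E * w)" for E
    by (simp add: w_def algebra_simps)
  ultimately show ?thesis
    by (metis Im_complex_of_real norm_cis)
qed

lemma exists_angle_balancing:
  fixes H K t :: real
  assumes "0 \<le> t" "t \<le> 1"
  shows "\<exists>s. (sin s)\<^sup>2 + cos s * sin s * H = t * (1 + cos s * sin s * K)"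
proof -
  define g where "g s = (sin s)\<^sup>2 + cos s * sin s * H - t * (1 + cos s * sin s * K)" for s
  have "g 0 \<le> 0" "0 \<le> g (pi / 2)"
    using assms by (auto simp: g_def)
  moreover have "\<forall>s. 0 \<le> s \<and> s \<le> pi / 2 \<longrightarrow> isCont g s"
    unfolding g_def by (intro allI impI continuous_intros)
  ultimately obtain s where "g s = 0"
    using IVT[of g 0 0 "pi / 2"] by auto
  then show ?thesis
    unfolding g_def by auto
qed

text \<open>For unit vectors x, y and z = a x + b y, with A = <y,x>, B = <Ty,x>, C = <Tx,y>,
  l = <Tx,x> and m = <Ty,y>, the two sides below are <Tz,z> and (l + t (m - l)) <z,z>.\<close>

lemma exists_unit_pair_interpolating:
  fixes l m A B C :: complex and t :: real
  assumes t: "0 \<le> t" "t \<le> 1"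
  shows "\<exists>a b. (cmod a)\<^sup>2 + (cmod b)\<^sup>2 = 1 \<and>
    (cmod a)\<^sup>2 * l + (cmod b)\<^sup>2 * m + a * cnj b * C + b * cnj a * B
      = (l + t * (m - l)) * (1 + a * cnj b * cnj A + b * cnj a * A)"
proof (cases "l = m")
  case True
  then show ?thesis
    by (intro exI[of _ 1] exI[of _ 0]) simp
next
  case False
  define d where "d = m - l"
  txt \<open>Rotating b by a phase E makes the off-diagonal coefficient real; along a = cos s,
    b = sin s E the defect is then a real function of s that changes sign on [0, pi/2].\<close>
  obtain E where E: "cmod E = 1" "Im (cnj E * ((C - l * cnj A) / d) + E * ((B - l * A) / d)) = 0"
    using exists_unit_rotation_to_real by blast
  define H where "H = Re (cnj E * ((C - l * cnj A) / d) + E * ((B - l * A) / d))"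
  define K where "K = Re (cnj E * cnj A + E * A)"
  have H_eq: "cnj E * C + E * B = d * H + l * (cnj E * cnj A + E * A)"
  proof -
    define Z where "Z = cnj E * ((C - l * cnj A) / d) + E * ((B - l * A) / d)"
    have "Z = H"
      using E(2) by (simp add: Z_def H_def complex_eq_iff)
    moreover have "d * Z = cnj E * (C - l * cnj A) + E * (B - l * A)"
      using False unfolding Z_def d_def by (simp add: distrib_left)
    ultimately show ?thesis
      by (simp add: algebra_simps)
  qed
  have K_eq: "cnj E * cnj A + E * A = K"
    by (simp add: K_def complex_eq_iff)
  obtain s where "(sin s)\<^sup>2 + cos s * sin s * H = t * (1 + cos s * sin s * K)"
    using exists_angle_balancing[OF t] by blast
  then have s: "complex_of_real ((sin s)\<^sup>2) + cos s * sin s * H = t * (1 + cos s * sin s * K)"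
    by (simp flip: of_real_mult of_real_add of_real_power)
  have cs: "complex_of_real ((cos s)\<^sup>2) + complex_of_real ((sin s)\<^sup>2) = 1"
    by (metis of_real_1 of_real_add sin_cos_squared_add2)
  have "(cos s)\<^sup>2 * l + (sin s)\<^sup>2 * m + cos s * sin s * (cnj E * C + E * B)
      = (l + t * (m - l)) * (1 + cos s * sin s * (cnj E * cnj A + E * A))"
    unfolding H_eq K_eq using s cs by (simp add: d_def) algebra
  then show ?thesis
  proof (intro exI conjI)
    show "(cmod (complex_of_real (cos s)))\<^sup>2 + (cmod (sin s * E))\<^sup>2 = 1"
      using E(1) by (simp add: norm_mult)
  qed (simp add: norm_mult E(1), algebra)
qed

lemma linear_operator_l2:
  assumes "linear_operator D T" "x \<in> D"
  shows "x \<in> l2" "T x \<in> l2"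
  using assms unfolding linear_operator_def by blast+

lemma linear_operator_scale:
  assumes "linear_operator D T" "x \<in> D"
  shows "(\<lambda>i. c * x i) \<in> D" "T (\<lambda>i. c * x i) = (\<lambda>i. c * T x i)"
  using assms unfolding linear_operator_def by blast+

lemma linear_operator_lincomb:
  assumes "linear_operator D T" "x \<in> D" "y \<in> D"
  shows "(\<lambda>i. a * x i + b * y i) \<in> D"
    and "T (\<lambda>i. a * x i + b * y i) = (\<lambda>i. a * T x i + b * T y i)"
proof -
  have add: "(\<lambda>i. u i + v i) \<in> D" "T (\<lambda>i. u i + v i) = (\<lambda>i. T u i + T v i)"
    if "u \<in> D" "v \<in> D" for u v
    using assms(1) that unfolding linear_operator_def by blast+
  show "(\<lambda>i. a * x i + b * y i) \<in> D"
    using add(1)[OF linear_operator_scale(1)[OF assms(1,2)] linear_operator_scale(1)[OF assms(1,3)]] .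
  show "T (\<lambda>i. a * x i + b * y i) = (\<lambda>i. a * T x i + b * T y i)"
    using add(2)[OF linear_operator_scale(1)[OF assms(1,2)] linear_operator_scale(1)[OF assms(1,3)]]
    by (simp add: linear_operator_scale(2)[OF assms(1,2)] linear_operator_scale(2)[OF assms(1,3)])
qed

lemma linear_operator_normalize:
  assumes lin: "linear_operator D T" and z: "z \<in> D" "0 < l2_norm z"
  obtains u where "u \<in> D" "l2_norm u = 1"
    "l2_inner (T z) z = (l2_norm z)\<^sup>2 * l2_inner (T u) u"
    "\<And>j. cmod (z j) = l2_norm z * cmod (u j)"
proof -
  have zl: "z \<in> l2" "T z \<in> l2"
    using linear_operator_l2[OF lin z(1)] by blast+
  define c where "c = complex_of_real (inverse (l2_norm z))"
  have norm_c: "cmod c = inverse (l2_norm z)"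
    using z(2) by (simp add: c_def norm_inverse)
  then have c: "(cmod c)\<^sup>2 * (l2_norm z)\<^sup>2 = 1"
    using z(2) by (simp add: power_mult_distrib[symmetric])
  show ?thesis
  proof
    show "(\<lambda>i. c * z i) \<in> D"
      by (rule linear_operator_scale(1)[OF lin z(1)])
    have "l2_inner (\<lambda>i. c * z i) (\<lambda>i. c * z i) = (cmod c)\<^sup>2 * (l2_norm z)\<^sup>2"
      using l2_inner_scale_both[OF zl(1) zl(1)] l2_inner_self[OF zl(1)] by simp
    then show "l2_norm (\<lambda>i. c * z i) = 1"
      using c l2_norm_eq_1_iff[OF l2_scale[OF zl(1)]] by (simp flip: of_real_mult)
    have "(l2_norm z)\<^sup>2 * l2_inner (T (\<lambda>i. c * z i)) (\<lambda>i. c * z i)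
        = ((cmod c)\<^sup>2 * (l2_norm z)\<^sup>2) * l2_inner (T z) z"
      unfolding linear_operator_scale(2)[OF lin z(1)] l2_inner_scale_both[OF zl(2) zl(1)] by simp
    then show "l2_inner (T z) z = (l2_norm z)\<^sup>2 * l2_inner (T (\<lambda>i. c * z i)) (\<lambda>i. c * z i)"
      using c by (simp flip: of_real_mult)
    show "cmod (z j) = l2_norm z * cmod (c * z j)" for j
      using z(2) by (simp add: norm_mult norm_c)
  qed
qed

lemma norm_lincomb_le_if_unit_pair:
  assumes "(cmod a)\<^sup>2 + (cmod b)\<^sup>2 = 1"
  shows "cmod (a * u + b * v) \<le> cmod u + cmod v"
proof -
  have "(cmod a)\<^sup>2 \<le> 1" "(cmod b)\<^sup>2 \<le> 1"
    using assms zero_le_power2[of "cmod a"] zero_le_power2[of "cmod b"] by linarith+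
  then have "cmod a \<le> 1" "cmod b \<le> 1"
    by (simp_all add: abs_square_le_1)
  then have "cmod a * cmod u + cmod b * cmod v \<le> 1 * cmod u + 1 * cmod v"
    by (intro add_mono mult_right_mono) auto
  then show ?thesis
    using norm_triangle_ineq[of "a * u" "b * v"] by (simp add: norm_mult)
qed

lemma l2_norm_lincomb_nearly_orthonormal:
  assumes x: "x \<in> l2" "l2_norm x = 1" and y: "y \<in> l2" "l2_norm y = 1"
    and nearly_orthogonal: "cmod (l2_inner y x) \<le> 1 / 4" and ab: "(cmod a)\<^sup>2 + (cmod b)\<^sup>2 = 1"
  shows "1 / 2 < l2_norm (\<lambda>i. a * x i + b * y i)"
proof -
  define z where "z = (\<lambda>i. a * x i + b * y i)"
  define w where "w = a * cnj b * l2_inner x y + b * cnj a * l2_inner y x"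
  have z: "z \<in> l2"
    unfolding z_def using x(1) y(1) by (intro l2_add l2_scale)
  have "2 * (cmod a * cmod b) \<le> 1"
    using sum_squares_bound[of "cmod a" "cmod b"] ab by simp
  then have "2 * (cmod a * cmod b) * cmod (l2_inner y x) \<le> 1 * (1 / 4)"
    using nearly_orthogonal by (intro mult_mono) auto
  then have "cmod w \<le> 1 / 4"
    using norm_triangle_ineq[of "a * cnj b * l2_inner x y" "b * cnj a * l2_inner y x"]
      l2_inner_commute[OF y(1) x(1)]
    by (simp add: w_def norm_mult mult_ac)
  moreover have "(l2_norm z)\<^sup>2 = 1 + Re w"
    using l2_inner_self[OF z] l2_inner_self_lincomb_unit[OF x(1) y(1) x(2) y(2) ab]
    unfolding z_def w_def by (metis Re_complex_of_real add.assoc plus_complex.sel(1) one_complex.sel(1))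
  ultimately have "(1 / 2)\<^sup>2 < (l2_norm z)\<^sup>2"
    using abs_Re_le_cmod[of w] by (simp add: power2_eq_square)
  then show ?thesis
    unfolding z_def[symmetric] using l2_norm_nonneg[OF z] by (rule power2_less_imp_less)
qed

lemma exists_lincomb_interpolating:
  fixes t :: real
  assumes lin: "linear_operator D T"
    and x: "x \<in> D" "l2_norm x = 1" and y: "y \<in> D" "l2_norm y = 1"
    and nearly_orthogonal: "cmod (l2_inner y x) \<le> 1 / 4"
    and t: "0 \<le> t" "t \<le> 1"
  obtains z where "z \<in> D" "1 / 2 < l2_norm z"
    "l2_inner (T z) z = ((1 - t) * l2_inner (T x) x + t * l2_inner (T y) y) * l2_inner z z"
    "\<And>j. cmod (z j) \<le> cmod (x j) + cmod (y j)"
proof -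
  have xl: "x \<in> l2" "T x \<in> l2" and yl: "y \<in> l2" "T y \<in> l2"
    using linear_operator_l2 lin x(1) y(1) by blast+
  obtain a b where ab: "(cmod a)\<^sup>2 + (cmod b)\<^sup>2 = 1" and
    interpolates: "(cmod a)\<^sup>2 * l2_inner (T x) x + (cmod b)\<^sup>2 * l2_inner (T y) y
        + a * cnj b * l2_inner (T x) y + b * cnj a * l2_inner (T y) x
      = (l2_inner (T x) x + t * (l2_inner (T y) y - l2_inner (T x) x))
        * (1 + a * cnj b * l2_inner x y + b * cnj a * l2_inner y x)"
    using exists_unit_pair_interpolating[OF t, where l = "l2_inner (T x) x" and m = "l2_inner (T y) y"
        and C = "l2_inner (T x) y" and B = "l2_inner (T y) x" and A = "l2_inner y x"]
    unfolding l2_inner_commute[OF yl(1) xl(1), symmetric] by blast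
  define z where "z = (\<lambda>i. a * x i + b * y i)"
  have z: "z \<in> D" "T z = (\<lambda>i. a * T x i + b * T y i)"
    unfolding z_def using linear_operator_lincomb[OF lin x(1) y(1)] by blast+
  show ?thesis
  proof (rule that[OF z(1)])
    show "1 / 2 < l2_norm z"
      unfolding z_def by (rule l2_norm_lincomb_nearly_orthonormal[OF xl(1) x(2) yl(1) y(2) nearly_orthogonal ab])
    show "l2_inner (T z) z = ((1 - t) * l2_inner (T x) x + t * l2_inner (T y) y) * l2_inner z z"
      unfolding z(2) unfolding z_def l2_inner_self_lincomb_unit[OF xl(1) yl(1) x(2) y(2) ab]
        l2_inner_lincomb_lincomb[OF xl(2) yl(2) xl(1) yl(1)]
      using interpolates by (simp add: algebra_simps)
    show "cmod (z j) \<le> cmod (x j) + cmod (y j)" for j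
      unfolding z_def by (rule norm_lincomb_le_if_unit_pair[OF ab])
  qed
qed

lemma exists_unit_vector_interpolating:
  fixes t :: real
  assumes lin: "linear_operator D T"
    and x: "x \<in> D" "l2_norm x = 1" and y: "y \<in> D" "l2_norm y = 1"
    and nearly_orthogonal: "cmod (l2_inner y x) \<le> 1 / 4"
    and t: "0 \<le> t" "t \<le> 1"
  obtains u where "u \<in> D" "l2_norm u = 1"
    "l2_inner (T u) u = (1 - t) * l2_inner (T x) x + t * l2_inner (T y) y"
    "\<And>j. cmod (u j) \<le> 2 * (cmod (x j) + cmod (y j))"
proof -
  define target where "target = (1 - t) * l2_inner (T x) x + t * l2_inner (T y) y"
  obtain z where z: "z \<in> D" "1 / 2 < l2_norm z" "l2_inner (T z) z = target * l2_inner z z"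
      "\<And>j. cmod (z j) \<le> cmod (x j) + cmod (y j)"
    using exists_lincomb_interpolating[OF assms] unfolding target_def by blast
  have zl: "z \<in> l2"
    using linear_operator_l2[OF lin z(1)] by blast
  obtain u where u: "u \<in> D" "l2_norm u = 1" "l2_inner (T z) z = (l2_norm z)\<^sup>2 * l2_inner (T u) u"
      "\<And>j. cmod (z j) = l2_norm z * cmod (u j)"
    using linear_operator_normalize[OF lin z(1)] z(2) by auto
  show ?thesis
  proof (rule that[OF u(1,2)])
    have "(l2_norm z)\<^sup>2 * l2_inner (T u) u = (l2_norm z)\<^sup>2 * target"
      using u(3) z(3) l2_inner_self[OF zl] by (auto simp: mult.commute)
    then show "l2_inner (T u) u = (1 - t) * l2_inner (T x) x + t * l2_inner (T y) y"
      using z(2) unfolding target_def by simp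
    show "cmod (u j) \<le> 2 * (cmod (x j) + cmod (y j))" for j
    proof -
      have "cmod (u j) \<le> 2 * cmod (z j)"
        using u(4)[of j] mult_right_mono[of 1 "2 * l2_norm z" "cmod (u j)"] z(2) by simp
      then show ?thesis
        using z(4)[of j] by (meson mult_left_mono order_trans zero_le_numeral)
    qed
  qed
qed

section \<open>The essential numerical range\<close>

lemma ess_num_range_approx_vector:
  assumes "z \<in> ess_num_range D T" "0 < \<epsilon>" "w \<in> l2"
  obtains u where "u \<in> D" "l2_norm u = 1" "\<forall>j<N. cmod (u j) < \<epsilon>"
    "cmod (l2_inner (T u) u - z) < \<epsilon>" "cmod (l2_inner u w) < \<epsilon>"
proof -
  obtain X where X: "\<And>n. X n \<in> D \<and> l2_norm (X n) = 1" and weak: "weakly_to_zero X"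
    and limit: "(\<lambda>n. l2_inner (T (X n)) (X n)) \<longlonglongrightarrow> z"
    using assms(1) unfolding ess_num_range_def by blast
  have "\<forall>j\<in>{..<N}. eventually (\<lambda>n. dist (X n j) 0 < \<epsilon>) sequentially"
    using tendstoD[OF weakly_to_zero_coordinate[OF weak] assms(2)] by blast
  then have "eventually (\<lambda>n. \<forall>j\<in>{..<N}. dist (X n j) 0 < \<epsilon>) sequentially"
    by (rule eventually_ball_finite[rotated]) simp
  moreover have "eventually (\<lambda>n. dist (l2_inner (T (X n)) (X n)) z < \<epsilon>) sequentially"
    by (rule tendstoD[OF limit assms(2)])
  moreover have "eventually (\<lambda>n. dist (l2_inner (X n) w) 0 < \<epsilon>) sequentially"
    using tendstoD[OF weak[unfolded weakly_to_zero_def, rule_format, OF assms(3)] assms(2)] .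
  ultimately have "eventually (\<lambda>n. (\<forall>j\<in>{..<N}. dist (X n j) 0 < \<epsilon>)
      \<and> dist (l2_inner (T (X n)) (X n)) z < \<epsilon> \<and> dist (l2_inner (X n) w) 0 < \<epsilon>) sequentially"
    by eventually_elim blast
  then obtain n where "(\<forall>j\<in>{..<N}. dist (X n j) 0 < \<epsilon>)
      \<and> dist (l2_inner (T (X n)) (X n)) z < \<epsilon> \<and> dist (l2_inner (X n) w) 0 < \<epsilon>"
    using eventually_happens'[OF sequentially_bot] by blast
  then show ?thesis
    using X[of n] that[of "X n"] by (simp add: dist_norm)
qed

lemma ess_num_rangeI_approx:
  assumes D: "D \<subseteq> l2"
    and approx: "\<And>\<epsilon> N. 0 < \<epsilon> \<Longrightarrow>
      \<exists>u\<in>D. l2_norm u = 1 \<and> (\<forall>j<N. cmod (u j) < \<epsilon>) \<and> cmod (l2_inner (T u) u - z) < \<epsilon>"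
  shows "z \<in> ess_num_range D T"
proof -
  define r :: "nat \<Rightarrow> real" where "r k = inverse (real (Suc k))" for k
  have "\<exists>u. u \<in> D \<and> l2_norm u = 1 \<and> (\<forall>j<k. cmod (u j) < r k)
      \<and> cmod (l2_inner (T u) u - z) < r k" for k
    using approx[of "r k" k] by (auto simp: r_def)
  then obtain U where U: "\<And>k. U k \<in> D" "\<And>k. l2_norm (U k) = 1"
      "\<And>k j. j < k \<Longrightarrow> cmod (U k j) < r k" "\<And>k. cmod (l2_inner (T (U k)) (U k) - z) < r k"
    by metis
  have r: "r \<longlonglongrightarrow> 0"
    unfolding r_def by (rule LIMSEQ_inverse_real_of_nat)
  have "(\<lambda>k. U k j) \<longlonglongrightarrow> 0" for j
  proof (rule Lim_null_comparison[OF _ r])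
    show "eventually (\<lambda>k. norm (U k j) \<le> r k) sequentially"
      unfolding eventually_sequentially using U(3) by (intro exI[of _ "Suc j"]) (simp add: less_imp_le)
  qed
  then have "weakly_to_zero U"
    using U(1,2) D by (intro weakly_to_zeroI[where B = 1]) auto
  moreover have "(\<lambda>k. l2_inner (T (U k)) (U k) - z) \<longlonglongrightarrow> 0"
    using U(4) by (intro Lim_null_comparison[OF _ r] always_eventually allI less_imp_le)
  then have "(\<lambda>k. l2_inner (T (U k)) (U k)) \<longlonglongrightarrow> z"
    by (simp add: Lim_null[symmetric])
  ultimately show ?thesis
    unfolding ess_num_range_def using U(1,2) by blast
qed

lemma closed_ess_num_range:
  assumes "linear_operator D T"
  shows "closed (ess_num_range D T)"
proof -
  have "z \<in> ess_num_range D T" if z: "z \<in> closure (ess_num_range D T)" for z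
  proof (rule ess_num_rangeI_approx)
    show "D \<subseteq> l2"
      using linear_operator_l2(1)[OF assms] by blast
    fix \<epsilon> :: real and N assume "0 < \<epsilon>"
    then obtain z' where z': "z' \<in> ess_num_range D T" "dist z' z < \<epsilon> / 2"
      using z unfolding closure_approachable by (meson half_gt_zero)
    obtain u where u: "u \<in> D" "l2_norm u = 1" "\<forall>j<N. cmod (u j) < \<epsilon> / 2"
      "cmod (l2_inner (T u) u - z') < \<epsilon> / 2"
      using ess_num_range_approx_vector[OF z'(1), of "\<epsilon> / 2" "\<lambda>i. 0" N] \<open>0 < \<epsilon>\<close>
      by (auto simp: l2_def)
    have "cmod (l2_inner (T u) u - z) \<le> cmod (l2_inner (T u) u - z') + cmod (z' - z)"
      using norm_triangle_ineq[of "l2_inner (T u) u - z'" "z' - z"] by simp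
    then have "cmod (l2_inner (T u) u - z) < \<epsilon>"
      using u(4) z'(2) by (simp add: dist_norm)
    then show "\<exists>u\<in>D. l2_norm u = 1 \<and> (\<forall>j<N. cmod (u j) < \<epsilon>)
        \<and> cmod (l2_inner (T u) u - z) < \<epsilon>"
      using u \<open>0 < \<epsilon>\<close> by (intro bexI[of _ u]) auto
  qed
  then show ?thesis
    using closure_subset_eq by blast
qed

lemma ess_spectrum_subset_ess_num_range:
  assumes "linear_operator D T"
  shows "ess_spectrum D T \<subseteq> ess_num_range D T"
proof
  fix z assume "z \<in> ess_spectrum D T"
  then obtain X where X: "\<And>n. X n \<in> D" "\<And>n. l2_norm (X n) = 1" and weak: "weakly_to_zero X"
    and singular: "(\<lambda>n. l2_norm (\<lambda>i. T (X n) i - z * X n i)) \<longlonglongrightarrow> 0"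
    unfolding ess_spectrum_def by blast
  have bound: "cmod (l2_inner (T (X n)) (X n) - z) \<le> l2_norm (\<lambda>i. T (X n) i - z * X n i)" for n
  proof -
    have x: "X n \<in> l2" "T (X n) \<in> l2"
      using linear_operator_l2[OF assms X(1)] by blast+
    have "(\<lambda>i. T (X n) i - z * X n i) \<in> l2"
      using l2_add[OF x(2) l2_scale[OF x(1), of "- z"]] by simp
    moreover have "l2_inner (\<lambda>i. T (X n) i - z * X n i) (X n) = l2_inner (T (X n)) (X n) - z"
      using l2_inner_lincomb_left[OF x(2) x(1) x(1), of 1 "- z"] X(2)[of n]
      by (simp add: l2_norm_eq_1_iff[OF x(1)])
    ultimately show ?thesis
      using l2_Cauchy_Schwarz[of "\<lambda>i. T (X n) i - z * X n i" "X n"] x X(2) by simp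
  qed
  have "(\<lambda>n. l2_inner (T (X n)) (X n) - z) \<longlonglongrightarrow> 0"
    using bound by (intro Lim_null_comparison[OF _ singular] always_eventually allI)
  then have "(\<lambda>n. l2_inner (T (X n)) (X n)) \<longlonglongrightarrow> z"
    by (simp add: Lim_null[symmetric])
  then show "z \<in> ess_num_range D T"
    unfolding ess_num_range_def using X weak by blast
qed

lemma ess_num_range_convex_combination_approx:
  assumes lin: "linear_operator D T"
    and p: "p \<in> ess_num_range D T" and q: "q \<in> ess_num_range D T"
    and s: "0 \<le> s" and t: "0 \<le> t" and st: "s + t = 1" and "0 < \<epsilon>"
  obtains u where "u \<in> D" "l2_norm u = 1" "\<forall>j<N. cmod (u j) < \<epsilon>"
    "cmod (l2_inner (T u) u - (s *\<^sub>R p + t *\<^sub>R q)) < \<epsilon>"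
proof -
  define \<delta> where "\<delta> = min (\<epsilon> / 4) (1 / 4)"
  have \<delta>: "0 < \<delta>" "\<delta> \<le> \<epsilon> / 4" "\<delta> \<le> 1 / 4"
    using \<open>0 < \<epsilon>\<close> by (auto simp: \<delta>_def)
  obtain x where x: "x \<in> D" "l2_norm x = 1" "\<forall>j<N. cmod (x j) < \<delta>"
      "cmod (l2_inner (T x) x - p) < \<delta>"
    using ess_num_range_approx_vector[OF p \<delta>(1), of "\<lambda>i. 0" N] by (auto simp: l2_def)
  obtain y where y: "y \<in> D" "l2_norm y = 1" "\<forall>j<N. cmod (y j) < \<delta>"
      "cmod (l2_inner (T y) y - q) < \<delta>" "cmod (l2_inner y x) < \<delta>"
    using ess_num_range_approx_vector[OF q \<delta>(1) linear_operator_l2(1)[OF lin x(1)]] by blast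
  have "cmod (l2_inner y x) \<le> 1 / 4" "t \<le> 1"
    using y(5) \<delta>(3) st s by auto
  then obtain u where u: "u \<in> D" "l2_norm u = 1"
      "l2_inner (T u) u = (1 - t) * l2_inner (T x) x + t * l2_inner (T y) y"
      "\<And>j. cmod (u j) \<le> 2 * (cmod (x j) + cmod (y j))"
    using exists_unit_vector_interpolating[OF lin x(1,2) y(1,2) _ t] by blast
  show ?thesis
  proof (rule that[OF u(1,2)])
    show "\<forall>j<N. cmod (u j) < \<epsilon>"
    proof (intro allI impI)
      fix j assume "j < N"
      then show "cmod (u j) < \<epsilon>"
        using u(4)[of j] x(3) y(3) \<delta>(2) by force
    qed
    have "l2_inner (T u) u - (s *\<^sub>R p + t *\<^sub>R q)
        = s * (l2_inner (T x) x - p) + t * (l2_inner (T y) y - q)"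
      using st u(3) by (simp add: scaleR_conv_of_real algebra_simps flip: of_real_diff)
    also have "cmod \<dots> \<le> s * cmod (l2_inner (T x) x - p) + t * cmod (l2_inner (T y) y - q)"
      using norm_triangle_ineq[of "s * (l2_inner (T x) x - p)" "t * (l2_inner (T y) y - q)"] s t
      by (simp add: norm_mult)
    also have "\<dots> < \<delta>"
      using x(4) y(4) s t st by (rule convex_bound_lt)
    finally show "cmod (l2_inner (T u) u - (s *\<^sub>R p + t *\<^sub>R q)) < \<epsilon>"
      using \<delta>(2) \<open>0 < \<epsilon>\<close> by linarith
  qed
qed

lemma convex_ess_num_range:
  assumes lin: "linear_operator D T"
  shows "convex (ess_num_range D T)"
proof (rule convexI)
  fix p q and s t :: real
  assume "p \<in> ess_num_range D T" "q \<in> ess_num_range D T" "0 \<le> s" "0 \<le> t" "s + t = 1"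
  note approx = ess_num_range_convex_combination_approx[OF lin this]
  show "s *\<^sub>R p + t *\<^sub>R q \<in> ess_num_range D T"
  proof (rule ess_num_rangeI_approx)
    show "D \<subseteq> l2"
      using linear_operator_l2(1)[OF lin] by blast
    show "\<exists>u\<in>D. l2_norm u = 1 \<and> (\<forall>j<N. cmod (u j) < \<epsilon>)
        \<and> cmod (l2_inner (T u) u - (s *\<^sub>R p + t *\<^sub>R q)) < \<epsilon>" if "0 < \<epsilon>" for \<epsilon> N
      using approx[OF that, of N] by blast
  qed
qed

theorem proposition2p2:
  assumes "linear_operator D T"
  shows "closed (ess_num_range D T) \<and> convex (ess_num_range D T) \<and>
         convex hull (ess_spectrum D T) \<subseteq> ess_num_range D T"
proof -
  have convex: "convex (ess_num_range D T)"
    by (rule convex_ess_num_range[OF assms])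
  then have "convex hull (ess_spectrum D T) \<subseteq> ess_num_range D T"
    by (rule hull_minimal[OF ess_spectrum_subset_ess_num_range[OF assms]])
  with closed_ess_num_range[OF assms] convex show ?thesis
    by blast
qed

end
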